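(* Let $E:[0,\infty)\times\mathbb{R}^2\to\mathbb{R}^2$ and $b:[0,\infty)\times\mathbb{R}^2\to\mathbb{R}$ be continuous with $b$ nowhere vanishing, $B=b\,e_3$. Fix $\Delta t>0$, $T>0$, $t^n=n\Delta t$, $N_T=\lfloor T/\Delta t\rfloor$. For each $\varepsilon>0$ let $(x^n_\varepsilon,v^n_\varepsilon)_{0\le n\le N_T}$ be generated (dropping the index $\varepsilon$ inside stages) by: given $(x^n,v^n)$, find $(x^{(1)},v^{(1)})$ and $(x^{(2)},v^{(2)})$ with $$x^{(1)}=x^n+\frac{\Delta t}{2\varepsilon}v^{(1)},\qquad v^{(1)}=v^n+\frac{\Delta t}{2\varepsilon}\Big[\frac{v^{(1)}}{\varepsilon}\wedge B(t^n,x^n)+E(t^n,x^n)\Big],$$ $$x^{(2)}=x^n+\frac{\Delta t}{2\varepsilon}v^{(2)},\qquad v^{(2)}=v^n+\frac{\Delta t}{2\varepsilon}\Big[\frac{v^{(2)}}{\varepsilon}\wedge B(t^{n+1},2x^{(1)}-x^n)+E(t^{n+1},2x^{(1)}-x^n)\Big],$$ and set $x^{n+1}=x^{(1)}+x^{(2)}-x^n$, $v^{n+1}=v^{(1)}+v^{(2)}-v^n$. Assume that for every $1\le n\le N_T$ the family $(x^n_\varepsilon,\varepsilon v^n_\varepsilon)_{\varepsilon>0}$ is bounded uniformly in $\varepsilon$ and that $(x^0_\varepsilon,\varepsilon v^0_\varepsilon)\to(y^0,0)$ as $\varepsilon\to0$. Then for every $0\le n\le N_T$, $x^n_\varepsilon\to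 y^n$ as $\varepsilon\to0$, where $(y^n)$ starts from $y^0$ and satisfies $$y^{(1)}=y^n+\frac{\Delta t}{2}U(t^n,y^n),\qquad y^{(2)}=y^n+\frac{\Delta t}{2}U(t^{n+1},2y^{(1)}-y^n),\qquad y^{n+1}=y^{(1)}+y^{(2)}-y^n.$$
   Context: Vectors of $\mathbb{R}^2$ are identified with vectors $(w_1,w_2,0)$ of $\mathbb{R}^3$, $e_3=(0,0,1)$, and $\wedge$ is the cross product; thus for $w\in\mathbb{R}^2$ and $B=b\,e_3$, $w\wedge B=b\,(w_2,-w_1)\in\mathbb{R}^2$. The guiding-center drift is $U(t,x)=\dfrac{E(t,x)\wedge B(t,x)}{\|B(t,x)\|^2}$. *)

theory Defs
  imports "HOL-Analysis.Analysis"
begin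

text \<open>Planar vectors are real^2 with components w$1, w$2. For B = b e3,
  w wedge B = b (w2, -w1).\<close>
definition wedgeB :: "real^2 \<Rightarrow> real \<Rightarrow> real^2" where
  "wedgeB w b = (\<chi> i. if i = 1 then b * w$2 else - (b * w$1))"

text \<open>Guiding-centre drift U = (E wedge B)/|B|^2 with |B|^2 = b^2.\<close>
definition drift :: "(real \<Rightarrow> real^2 \<Rightarrow> real^2) \<Rightarrow> (real \<Rightarrow> real^2 \<Rightarrow> real)
    \<Rightarrow> real \<Rightarrow> real^2 \<Rightarrow> real^2" where
  "drift E b t x = (1 / (b t x)^2) *\<^sub>R wedgeB (E t x) (b t x)"

end

theory Submission
  imports Defs
begin

text \<open>Each stage is a linear equation for the stage velocity \<open>v'\<close>, and it can be solved
  exactly: for the rotation \<open>J w = w \<and> B\<close> one has \<open>J (J w) = -b\<^sup>2 w\<close>, so eliminating \<open>J v'\<close>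
  gives \<open>v' = \<epsilon> (\<epsilon>\<^sup>2 W + h J W) / (\<epsilon>\<^sup>4 + h\<^sup>2 b\<^sup>2)\<close> with \<open>W = \<epsilon> v + h E\<close> and \<open>h = \<Delta>t/2\<close>.
  Hence, as \<open>\<epsilon> \<rightarrow> 0\<close>, the displacement \<open>(h/\<epsilon>) v'\<close> tends to \<open>h U\<close> and \<open>\<epsilon> v'\<close> tends to \<open>0\<close>
  as soon as \<open>\<epsilon> v \<rightarrow> 0\<close>. Induction on \<open>n\<close> carries both \<open>x\<^sup>n \<rightarrow> y\<^sup>n\<close> and \<open>\<epsilon> v\<^sup>n \<rightarrow> 0\<close>
  through the scheme.\<close>

lemma wedgeB_add: "wedgeB (u + w) \<beta> = wedgeB u \<beta> + wedgeB w \<beta>"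
  by (simp add: wedgeB_def vec_eq_iff algebra_simps)

lemma wedgeB_scaleR: "wedgeB (a *\<^sub>R w) \<beta> = a *\<^sub>R wedgeB w \<beta>"
  by (simp add: wedgeB_def vec_eq_iff)

lemma wedgeB_wedgeB: "wedgeB (wedgeB w \<beta>) \<beta> = - (\<beta>\<^sup>2 *\<^sub>R w)"
  by (simp add: wedgeB_def vec_eq_iff forall_2 power2_eq_square)

lemma tendsto_wedgeB [tendsto_intros]:
  assumes "(f \<longlongrightarrow> w) F" and "(g \<longlongrightarrow> \<beta>) F"
  shows "((\<lambda>s. wedgeB (f s) (g s)) \<longlongrightarrow> wedgeB w \<beta>) F"
proof (rule vec_tendstoI)
  fix i :: 2
  show "((\<lambda>s. wedgeB (f s) (g s) $ i) \<longlongrightarrow> wedgeB w \<beta> $ i) F"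
    unfolding wedgeB_def by (auto intro!: tendsto_intros assms)
qed

lemma implicit_stage_solution:
  fixes V V1 e :: "real^2"
  assumes s: "s > 0"
    and eq: "V1 = V + (h / s) *\<^sub>R (wedgeB ((1 / s) *\<^sub>R V1) \<beta> + e)"
  shows "V1 = (s / (s^4 + h\<^sup>2 * \<beta>\<^sup>2)) *\<^sub>R
      (s\<^sup>2 *\<^sub>R (s *\<^sub>R V + h *\<^sub>R e) + h *\<^sub>R wedgeB (s *\<^sub>R V + h *\<^sub>R e) \<beta>)"
proof -
  define W where "W = s *\<^sub>R V + h *\<^sub>R e"
  have lin: "s\<^sup>2 *\<^sub>R V1 = s *\<^sub>R W + h *\<^sub>R wedgeB V1 \<beta>"
    using s by (subst eq) (simp add: W_def wedgeB_add wedgeB_scaleR algebra_simps power2_eq_square)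
  have rot: "s\<^sup>2 *\<^sub>R wedgeB V1 \<beta> = s *\<^sub>R wedgeB W \<beta> - (h * \<beta>\<^sup>2) *\<^sub>R V1"
    using arg_cong[OF lin, of "\<lambda>w. wedgeB w \<beta>"] by (simp add: wedgeB_add wedgeB_scaleR wedgeB_wedgeB)
  define D where "D = s^4 + h\<^sup>2 * \<beta>\<^sup>2"
  have "D *\<^sub>R V1 = s *\<^sub>R (s\<^sup>2 *\<^sub>R W + h *\<^sub>R wedgeB W \<beta>)"
  proof -
    have "s^4 *\<^sub>R V1 = s\<^sup>2 *\<^sub>R (s\<^sup>2 *\<^sub>R V1)" by (simp add: power_numeral_reduce)
    also have "\<dots> = s\<^sup>2 *\<^sub>R (s *\<^sub>R W + h *\<^sub>R wedgeB V1 \<beta>)" by (simp only: lin)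
    also have "\<dots> = s^3 *\<^sub>R W + h *\<^sub>R (s\<^sup>2 *\<^sub>R wedgeB V1 \<beta>)"
      by (simp add: algebra_simps power_numeral_reduce)
    also have "\<dots> = s^3 *\<^sub>R W + h *\<^sub>R (s *\<^sub>R wedgeB W \<beta> - (h * \<beta>\<^sup>2) *\<^sub>R V1)"
      by (simp only: rot)
    finally show ?thesis by (simp add: D_def algebra_simps power2_eq_square power_numeral_reduce)
  qed
  moreover have "D > 0" using s by (simp add: D_def add_pos_nonneg)
  ultimately show ?thesis
    unfolding W_def[symmetric] D_def[symmetric]
    by (metis (no_types, lifting) divide_inverse_commute less_irrefl scaleR_one scaleR_scaleR right_inverse)
qed

lemma implicit_stage_tendsto:
  fixes V V1 e :: "real \<Rightarrow> real^2" and \<beta> :: "real \<Rightarrow> real"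
  assumes h: "h > 0"
    and eq: "\<And>s. s > 0 \<Longrightarrow> V1 s = V s + (h / s) *\<^sub>R (wedgeB ((1 / s) *\<^sub>R V1 s) (\<beta> s) + e s)"
    and \<beta>: "(\<beta> \<longlongrightarrow> \<beta>0) (at_right 0)" and \<beta>0: "\<beta>0 \<noteq> 0"
    and e: "(e \<longlongrightarrow> e0) (at_right 0)"
    and V: "((\<lambda>s. s *\<^sub>R V s) \<longlongrightarrow> 0) (at_right 0)"
  shows "((\<lambda>s. (h / s) *\<^sub>R V1 s) \<longlongrightarrow> h *\<^sub>R ((1 / \<beta>0\<^sup>2) *\<^sub>R wedgeB e0 \<beta>0)) (at_right 0)"
    and "((\<lambda>s. s *\<^sub>R V1 s) \<longlongrightarrow> 0) (at_right 0)"
proof -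
  define W where "W s = s *\<^sub>R V s + h *\<^sub>R e s" for s
  define D where "D s = s^4 + h\<^sup>2 * (\<beta> s)\<^sup>2" for s
  define R where "R s = s\<^sup>2 *\<^sub>R W s + h *\<^sub>R wedgeB (W s) (\<beta> s)" for s
  have s0: "((\<lambda>s. s) \<longlongrightarrow> 0) (at_right (0::real))" by (rule tendsto_ident_at)
  have D0: "0^4 + h\<^sup>2 * \<beta>0\<^sup>2 \<noteq> 0" using h \<beta>0 by simp
  have R: "(R \<longlongrightarrow> 0\<^sup>2 *\<^sub>R (0 + h *\<^sub>R e0) + h *\<^sub>R wedgeB (0 + h *\<^sub>R e0) \<beta>0) (at_right 0)"
    unfolding R_def W_def by (intro tendsto_intros s0 V e \<beta>)
  have D: "(D \<longlongrightarrow> 0^4 + h\<^sup>2 * \<beta>0\<^sup>2) (at_right 0)"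
    unfolding D_def by (intro tendsto_intros s0 \<beta>)
  have V1: "\<forall>\<^sub>F s in at_right 0. V1 s = (s / D s) *\<^sub>R R s"
    using eventually_at_right_less[of 0]
    by eventually_elim (simp add: D_def R_def W_def implicit_stage_solution[OF _ eq])
  have "((\<lambda>s. (h / D s) *\<^sub>R R s) \<longlongrightarrow> (h / (0^4 + h\<^sup>2 * \<beta>0\<^sup>2)) *\<^sub>R
      (0\<^sup>2 *\<^sub>R (0 + h *\<^sub>R e0) + h *\<^sub>R wedgeB (0 + h *\<^sub>R e0) \<beta>0)) (at_right 0)"
    by (intro tendsto_intros R D D0)
  moreover have "\<forall>\<^sub>F s in at_right 0. (h / D s) *\<^sub>R R s = (h / s) *\<^sub>R V1 s"
    using V1 eventually_at_right_less[of 0] by eventually_elim simp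
  moreover have "(h / (0^4 + h\<^sup>2 * \<beta>0\<^sup>2)) *\<^sub>R (0\<^sup>2 *\<^sub>R (0 + h *\<^sub>R e0) + h *\<^sub>R wedgeB (0 + h *\<^sub>R e0) \<beta>0)
      = h *\<^sub>R ((1 / \<beta>0\<^sup>2) *\<^sub>R wedgeB e0 \<beta>0)"
    using h by (simp add: wedgeB_scaleR power2_eq_square)
  ultimately show "((\<lambda>s. (h / s) *\<^sub>R V1 s) \<longlongrightarrow> h *\<^sub>R ((1 / \<beta>0\<^sup>2) *\<^sub>R wedgeB e0 \<beta>0)) (at_right 0)"
    using Lim_transform_eventually by fastforce
  have "((\<lambda>s. (s\<^sup>2 / D s) *\<^sub>R R s) \<longlongrightarrow> (0\<^sup>2 / (0^4 + h\<^sup>2 * \<beta>0\<^sup>2)) *\<^sub>R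
      (0\<^sup>2 *\<^sub>R (0 + h *\<^sub>R e0) + h *\<^sub>R wedgeB (0 + h *\<^sub>R e0) \<beta>0)) (at_right 0)"
    by (intro tendsto_intros s0 R D D0)
  moreover have "\<forall>\<^sub>F s in at_right 0. (s\<^sup>2 / D s) *\<^sub>R R s = s *\<^sub>R V1 s"
    using V1 by eventually_elim (simp add: power2_eq_square)
  ultimately show "((\<lambda>s. s *\<^sub>R V1 s) \<longlongrightarrow> 0) (at_right 0)"
    using Lim_transform_eventually by fastforce
qed

lemma tendsto_at_fixed_time:
  fixes f :: "real \<Rightarrow> 'a::topological_space \<Rightarrow> 'b::topological_space"
  assumes "continuous_on ({0..} \<times> UNIV) (\<lambda>(t, z). f t z)" and "t \<ge> 0" and "(g \<longlongrightarrow> z) F"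
  shows "((\<lambda>s. f t (g s)) \<longlongrightarrow> f t z) F"
  using continuous_on_tendsto_compose[OF assms(1) tendsto_Pair[OF tendsto_const assms(3)]] assms(2)
  by simp

lemma stage_tendsto:
  fixes E :: "real \<Rightarrow> real^2 \<Rightarrow> real^2" and b :: "real \<Rightarrow> real^2 \<Rightarrow> real"
    and X V X' V' Z :: "real \<Rightarrow> real^2"
  assumes contE: "continuous_on ({0..} \<times> UNIV) (\<lambda>(t, z). E t z)"
    and contb: "continuous_on ({0..} \<times> UNIV) (\<lambda>(t, z). b t z)"
    and b_nz: "\<And>t z. t \<ge> 0 \<Longrightarrow> b t z \<noteq> 0"
    and t: "t \<ge> 0" and h: "h > 0"
    and stage_x: "\<And>s. s > 0 \<Longrightarrow> X' s = X s + (h / s) *\<^sub>R V' s"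
    and stage_v: "\<And>s. s > 0 \<Longrightarrow>
       V' s = V s + (h / s) *\<^sub>R (wedgeB ((1 / s) *\<^sub>R V' s) (b t (Z s)) + E t (Z s))"
    and X: "(X \<longlongrightarrow> y) (at_right 0)" and Z: "(Z \<longlongrightarrow> z) (at_right 0)"
    and V: "((\<lambda>s. s *\<^sub>R V s) \<longlongrightarrow> 0) (at_right 0)"
  shows "(X' \<longlongrightarrow> y + h *\<^sub>R drift E b t z) (at_right 0)"
    and "((\<lambda>s. s *\<^sub>R V' s) \<longlongrightarrow> 0) (at_right 0)"
proof -
  note limits = implicit_stage_tendsto[OF h stage_v tendsto_at_fixed_time[OF contb t Z] b_nz[OF t]
      tendsto_at_fixed_time[OF contE t Z] V]
  have "((\<lambda>s. X s + (h / s) *\<^sub>R V' s) \<longlongrightarrow> y + h *\<^sub>R drift E b t z) (at_right 0)"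
    unfolding drift_def by (intro tendsto_intros X limits(1))
  moreover have "\<forall>\<^sub>F s in at_right 0. X s + (h / s) *\<^sub>R V' s = X' s"
    using eventually_at_right_less[of 0] by eventually_elim (simp add: stage_x)
  ultimately show "(X' \<longlongrightarrow> y + h *\<^sub>R drift E b t z) (at_right 0)"
    using Lim_transform_eventually by fastforce
  show "((\<lambda>s. s *\<^sub>R V' s) \<longlongrightarrow> 0) (at_right 0)" using limits(2) by simp
qed

lemma midpoint_step_tendsto:
  fixes E :: "real \<Rightarrow> real^2 \<Rightarrow> real^2" and b :: "real \<Rightarrow> real^2 \<Rightarrow> real"
    and X V X1 V1 X2 V2 X' V' :: "real \<Rightarrow> real^2"
  assumes contE: "continuous_on ({0..} \<times> UNIV) (\<lambda>(t, z). E t z)"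
    and contb: "continuous_on ({0..} \<times> UNIV) (\<lambda>(t, z). b t z)"
    and b_nz: "\<And>t z. t \<ge> 0 \<Longrightarrow> b t z \<noteq> 0"
    and dt: "dt > 0" and t0: "t0 \<ge> 0" and t1: "t1 \<ge> 0"
    and stage1_x: "\<And>s. s > 0 \<Longrightarrow> X1 s = X s + (dt / (2 * s)) *\<^sub>R V1 s"
    and stage1_v: "\<And>s. s > 0 \<Longrightarrow>
       V1 s = V s + (dt / (2 * s)) *\<^sub>R (wedgeB ((1 / s) *\<^sub>R V1 s) (b t0 (X s)) + E t0 (X s))"
    and stage2_x: "\<And>s. s > 0 \<Longrightarrow> X2 s = X s + (dt / (2 * s)) *\<^sub>R V2 s"
    and stage2_v: "\<And>s. s > 0 \<Longrightarrow>
       V2 s = V s + (dt / (2 * s)) *\<^sub>R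
         (wedgeB ((1 / s) *\<^sub>R V2 s) (b t1 (2 *\<^sub>R X1 s - X s)) + E t1 (2 *\<^sub>R X1 s - X s))"
    and step_x: "\<And>s. s > 0 \<Longrightarrow> X' s = X1 s + X2 s - X s"
    and step_v: "\<And>s. s > 0 \<Longrightarrow> V' s = V1 s + V2 s - V s"
    and X: "(X \<longlongrightarrow> y) (at_right 0)"
    and V: "((\<lambda>s. s *\<^sub>R V s) \<longlongrightarrow> 0) (at_right 0)"
  shows "(X' \<longlongrightarrow>
      (let ya = y + (dt / 2) *\<^sub>R drift E b t0 y;
           yb = y + (dt / 2) *\<^sub>R drift E b t1 (2 *\<^sub>R ya - y)
       in ya + yb - y)) (at_right 0)"
    and "((\<lambda>s. s *\<^sub>R V' s) \<longlongrightarrow> 0) (at_right 0)"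
proof -
  have h: "dt / 2 > 0" using dt by simp
  define ya where "ya = y + (dt / 2) *\<^sub>R drift E b t0 y"
  have S1: "(X1 \<longlongrightarrow> ya) (at_right 0) \<and> ((\<lambda>s. s *\<^sub>R V1 s) \<longlongrightarrow> 0) (at_right 0)"
    using stage_tendsto[OF contE contb b_nz t0 h, where X' = X1 and V' = V1
        and Z = X and z = y and X = X and V = V and y = y]
      stage1_x stage1_v X V by (simp add: ya_def)
  have S2: "(X2 \<longlongrightarrow> y + (dt / 2) *\<^sub>R drift E b t1 (2 *\<^sub>R ya - y)) (at_right 0)
      \<and> ((\<lambda>s. s *\<^sub>R V2 s) \<longlongrightarrow> 0) (at_right 0)"
    using stage_tendsto[OF contE contb b_nz t1 h, where X' = X2 and V' = V2
        and Z = "\<lambda>s. 2 *\<^sub>R X1 s - X s" and z = "2 *\<^sub>R ya - y" and X = X and V = V and y = y]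
      stage2_x stage2_v X V S1 by (simp add: tendsto_intros)
  have "((\<lambda>s. X1 s + X2 s - X s) \<longlongrightarrow> ya + (y + (dt / 2) *\<^sub>R drift E b t1 (2 *\<^sub>R ya - y)) - y)
      (at_right 0)"
    by (intro tendsto_intros S1[THEN conjunct1] S2[THEN conjunct1] X)
  moreover have "((\<lambda>s. s *\<^sub>R V1 s + s *\<^sub>R V2 s - s *\<^sub>R V s) \<longlongrightarrow> 0 + 0 - 0) (at_right 0)"
    by (intro tendsto_intros S1[THEN conjunct2] S2[THEN conjunct2] V)
  moreover have "\<forall>\<^sub>F s in at_right 0. X1 s + X2 s - X s = X' s
      \<and> s *\<^sub>R V1 s + s *\<^sub>R V2 s - s *\<^sub>R V s = s *\<^sub>R V' s"
    using eventually_at_right_less[of 0]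
    by eventually_elim (simp add: step_x step_v algebra_simps)
  ultimately show "(X' \<longlongrightarrow> (let ya = y + (dt / 2) *\<^sub>R drift E b t0 y;
           yb = y + (dt / 2) *\<^sub>R drift E b t1 (2 *\<^sub>R ya - y) in ya + yb - y)) (at_right 0)"
    and "((\<lambda>s. s *\<^sub>R V' s) \<longlongrightarrow> 0) (at_right 0)"
    unfolding ya_def Let_def using Lim_transform_eventually eventually_conj_iff by fastforce+
qed

theorem proposition3p2:
  fixes E :: "real \<Rightarrow> real^2 \<Rightarrow> real^2"
    and b :: "real \<Rightarrow> real^2 \<Rightarrow> real"
    and dt T :: real
    and x v x1 v1 x2 v2 :: "real \<Rightarrow> nat \<Rightarrow> real^2"
    and y :: "nat \<Rightarrow> real^2"
    and y0 :: "real^2"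
  assumes contE: "continuous_on ({0..} \<times> UNIV) (\<lambda>(t, z). E t z)"
    and contb: "continuous_on ({0..} \<times> UNIV) (\<lambda>(t, z). b t z)"
    and b_nz: "\<And>t z. t \<ge> 0 \<Longrightarrow> b t z \<noteq> 0"
    and dt_pos: "dt > 0" and T_pos: "T > 0"
    and stage1_x: "\<And>eps n. eps > 0 \<Longrightarrow> n < nat \<lfloor>T / dt\<rfloor> \<Longrightarrow>
       x1 eps n = x eps n + (dt / (2 * eps)) *\<^sub>R v1 eps n"
    and stage1_v: "\<And>eps n. eps > 0 \<Longrightarrow> n < nat \<lfloor>T / dt\<rfloor> \<Longrightarrow>
       v1 eps n = v eps n + (dt / (2 * eps)) *\<^sub>R
         (wedgeB ((1 / eps) *\<^sub>R v1 eps n) (b (real n * dt) (x eps n))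
          + E (real n * dt) (x eps n))"
    and stage2_x: "\<And>eps n. eps > 0 \<Longrightarrow> n < nat \<lfloor>T / dt\<rfloor> \<Longrightarrow>
       x2 eps n = x eps n + (dt / (2 * eps)) *\<^sub>R v2 eps n"
    and stage2_v: "\<And>eps n. eps > 0 \<Longrightarrow> n < nat \<lfloor>T / dt\<rfloor> \<Longrightarrow>
       v2 eps n = v eps n + (dt / (2 * eps)) *\<^sub>R
         (wedgeB ((1 / eps) *\<^sub>R v2 eps n)
             (b (real (Suc n) * dt) (2 *\<^sub>R x1 eps n - x eps n))
          + E (real (Suc n) * dt) (2 *\<^sub>R x1 eps n - x eps n))"
    and step_x: "\<And>eps n. eps > 0 \<Longrightarrow> n < nat \<lfloor>T / dt\<rfloor> \<Longrightarrow>
       x eps (Suc n) = x1 eps n + x2 eps n - x eps n"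
    and step_v: "\<And>eps n. eps > 0 \<Longrightarrow> n < nat \<lfloor>T / dt\<rfloor> \<Longrightarrow>
       v eps (Suc n) = v1 eps n + v2 eps n - v eps n"
    and bounded: "\<And>n. 1 \<le> n \<Longrightarrow> n \<le> nat \<lfloor>T / dt\<rfloor> \<Longrightarrow>
       \<exists>C. \<forall>eps>0. norm (x eps n) \<le> C \<and> norm (eps *\<^sub>R v eps n) \<le> C"
    and init_x: "((\<lambda>eps. x eps 0) \<longlongrightarrow> y0) (at_right 0)"
    and init_v: "((\<lambda>eps. eps *\<^sub>R v eps 0) \<longlongrightarrow> 0) (at_right 0)"
    and y_0: "y 0 = y0"
    and y_step: "\<And>n. n < nat \<lfloor>T / dt\<rfloor> \<Longrightarrow>
       y (Suc n) =
         (let ya = y n + (dt / 2) *\<^sub>R drift E b (real n * dt) (y n);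
              yb = y n + (dt / 2) *\<^sub>R drift E b (real (Suc n) * dt) (2 *\<^sub>R ya - y n)
          in ya + yb - y n)"
  shows "\<forall>n \<le> nat \<lfloor>T / dt\<rfloor>. ((\<lambda>eps. x eps n) \<longlongrightarrow> y n) (at_right 0)"
proof -
  have "((\<lambda>eps. x eps n) \<longlongrightarrow> y n) (at_right 0) \<and> ((\<lambda>eps. eps *\<^sub>R v eps n) \<longlongrightarrow> 0) (at_right 0)"
    if "n \<le> nat \<lfloor>T / dt\<rfloor>" for n
    using that
  proof (induction n)
    case 0
    show ?case using init_x init_v y_0 by simp
  next
    case (Suc n)
    then have n: "n < nat \<lfloor>T / dt\<rfloor>" by simp
    have t: "real n * dt \<ge> 0" "real (Suc n) * dt \<ge> 0" using dt_pos by simp_all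
    from Suc.IH n have x: "((\<lambda>eps. x eps n) \<longlongrightarrow> y n) (at_right 0)"
      and v: "((\<lambda>eps. eps *\<^sub>R v eps n) \<longlongrightarrow> 0) (at_right 0)" by simp_all
    show ?case
      unfolding y_step[OF n]
      using midpoint_step_tendsto[OF contE contb b_nz dt_pos t stage1_x[OF _ n] stage1_v[OF _ n]
          stage2_x[OF _ n] stage2_v[OF _ n] step_x[OF _ n] step_v[OF _ n] x v]
      by blast
  qed
  then show ?thesis by blast
qed

end
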